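(* Every GO-space is $C$-selective.
   Context: All spaces are assumed $T_1$. A GO-space (generalized ordered space) is a linearly ordered set with a topology finer than the order topology that has a base of order-convex sets (equivalently, a subspace of a linearly ordered topological space). For spaces $Y$, $X$, a map $\varphi:Y\to\mathcal P(X)\setminus\{\emptyset\}$ is lower semicontinuous (l.s.c.) if $\{y:\varphi(y)\cap U\neq\emptyset\}$ is open in $Y$ for every open $U\subseteq X$; a selection is a map $f:Y\to X$ with $f(y)\in\varphi(y)$ for all $y$. $X$ is $Y$-selective if every l.s.c. map from $Y$ to the family of nonempty closed subsets of $X$ has a continuous selection; $X$ is $C$-selective if it is $Y$-selective for every countable regular space $Y$. *)

theory Defs
  imports "HOL-Analysis.Analysis"
begin

definition linear_order_on_set :: "'a set \<Rightarrow> ('a \<Rightarrow> 'a \<Rightarrow> bool) \<Rightarrow> bool" where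
  "linear_order_on_set S le \<longleftrightarrow>
     (\<forall>x\<in>S. le x x) \<and>
     (\<forall>x\<in>S. \<forall>y\<in>S. le x y \<and> le y x \<longrightarrow> x = y) \<and>
     (\<forall>x\<in>S. \<forall>y\<in>S. \<forall>z\<in>S. le x y \<and> le y z \<longrightarrow> le x z) \<and>
     (\<forall>x\<in>S. \<forall>y\<in>S. le x y \<or> le y x)"

definition order_convex :: "'a set \<Rightarrow> ('a \<Rightarrow> 'a \<Rightarrow> bool) \<Rightarrow> 'a set \<Rightarrow> bool" where
  "order_convex S le V \<longleftrightarrow>
     (\<forall>a\<in>V. \<forall>c\<in>V. \<forall>b\<in>S. le a b \<and> le b c \<longrightarrow> b \<in> V)"

text \<open>GO-space: linearly ordered set whose topology is finer than the order topology
  (i.e. all open rays are open) and has a base of order-convex open sets.\<close>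
definition go_space :: "'a topology \<Rightarrow> ('a \<Rightarrow> 'a \<Rightarrow> bool) \<Rightarrow> bool" where
  "go_space X le \<longleftrightarrow>
     linear_order_on_set (topspace X) le \<and>
     (\<forall>a\<in>topspace X. openin X {x\<in>topspace X. le x a \<and> x \<noteq> a} \<and>
                       openin X {x\<in>topspace X. le a x \<and> x \<noteq> a}) \<and>
     (\<forall>U x. openin X U \<and> x \<in> U \<longrightarrow>
        (\<exists>V. openin X V \<and> order_convex (topspace X) le V \<and> x \<in> V \<and> V \<subseteq> U))"

definition lsc :: "'b topology \<Rightarrow> 'a topology \<Rightarrow> ('b \<Rightarrow> 'a set) \<Rightarrow> bool" where
  "lsc Y X \<phi> \<longleftrightarrow>
     (\<forall>U. openin X U \<longrightarrow> openin Y {y\<in>topspace Y. \<phi> y \<inter> U \<noteq> {}})"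

definition selective :: "'b topology \<Rightarrow> 'a topology \<Rightarrow> bool" where
  "selective Y X \<longleftrightarrow>
     (\<forall>\<phi>. (\<forall>y\<in>topspace Y. closedin X (\<phi> y) \<and> \<phi> y \<noteq> {}) \<and> lsc Y X \<phi> \<longrightarrow>
        (\<exists>f. continuous_map Y X f \<and> (\<forall>y\<in>topspace Y. f y \<in> \<phi> y)))"

end

theory Submission
  imports Defs
begin

(*
  Enumerate Y as e 0, e 1, ... and shrink the given map step by step: step n passes to a
  closed-valued l.s.c. submap whose value at e n is a single point and which is upper
  semicontinuous at e n. The values only decrease, so the point chosen at step n survives at
  e n; this gives a selection, continuous at each e n by the upper semicontinuity there.

  One step, at y0 with chosen point x0: since Y is countable, regular and T1, it is
  zero-dimensional, so y0 has clopen neighbourhoods Z 0, Z 1, ... decreasing to {y0}. Since X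
  is a GO-space, near x0 the countably many values missing x0 are covered by open sets A k
  whose closures converge to x0 (on each side of x0, convex neighbourhoods of x0 avoiding the
  individual values yield a sequence approaching x0). On the ring Z k - Z (k + 1) each value is
  cut down to the closure of its trace on A k.
*)

section \<open>GO-spaces\<close>

lemma go_space_linear_order: "go_space X le \<Longrightarrow> linear_order_on_set (topspace X) le"
  by (simp add: go_space_def)

lemma go_space_refl: "go_space X le \<Longrightarrow> x \<in> topspace X \<Longrightarrow> le x x"
  using go_space_linear_order unfolding linear_order_on_set_def by blast

lemma go_space_antisym:
  "go_space X le \<Longrightarrow> x \<in> topspace X \<Longrightarrow> y \<in> topspace X \<Longrightarrow> le x y \<Longrightarrow> le y x \<Longrightarrow> x = y"
  using go_space_linear_order unfolding linear_order_on_set_def by blast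

lemma go_space_trans:
  "go_space X le \<Longrightarrow> x \<in> topspace X \<Longrightarrow> y \<in> topspace X \<Longrightarrow> z \<in> topspace X \<Longrightarrow>
    le x y \<Longrightarrow> le y z \<Longrightarrow> le x z"
  using go_space_linear_order unfolding linear_order_on_set_def by blast

lemma go_space_total:
  "go_space X le \<Longrightarrow> x \<in> topspace X \<Longrightarrow> y \<in> topspace X \<Longrightarrow> le x y \<or> le y x"
  using go_space_linear_order unfolding linear_order_on_set_def by blast

lemma go_space_openin_rays:
  assumes "go_space X le" "a \<in> topspace X"
  shows "openin X {x\<in>topspace X. le x a \<and> x \<noteq> a}"
    and "openin X {x\<in>topspace X. le a x \<and> x \<noteq> a}"
  using assms unfolding go_space_def by simp_all

lemma go_space_convex_nbhd:
  assumes "go_space X le" "openin X U" "x \<in> U"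
  obtains V where "openin X V" "order_convex (topspace X) le V" "x \<in> V" "V \<subseteq> U"
  using assms unfolding go_space_def by blast

lemma order_convexD:
  "order_convex S le V \<Longrightarrow> a \<in> V \<Longrightarrow> c \<in> V \<Longrightarrow> b \<in> S \<Longrightarrow> le a b \<Longrightarrow> le b c \<Longrightarrow> b \<in> V"
  unfolding order_convex_def by blast

lemma order_convex_converse:
  "order_convex S (\<lambda>x y. le y x) V \<longleftrightarrow> order_convex S le V"
  unfolding order_convex_def by blast

lemma go_space_converse:
  assumes "go_space X le"
  shows "go_space X (\<lambda>x y. le y x)"
proof -
  have "linear_order_on_set (topspace X) (\<lambda>x y. le y x)"
    using go_space_linear_order[OF assms] unfolding linear_order_on_set_def by blast
  moreover have "\<forall>a\<in>topspace X. openin X {x\<in>topspace X. le a x \<and> x \<noteq> a} \<and>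
      openin X {x\<in>topspace X. le x a \<and> x \<noteq> a}"
    using go_space_openin_rays[OF assms] by blast
  moreover have "\<forall>U x. openin X U \<and> x \<in> U \<longrightarrow>
      (\<exists>V. openin X V \<and> order_convex (topspace X) le V \<and> x \<in> V \<and> V \<subseteq> U)"
    using go_space_convex_nbhd[OF assms] by metis
  ultimately show ?thesis
    unfolding go_space_def order_convex_converse[of _ le] by (intro conjI)
qed

lemma go_space_closedin_interval:
  assumes go: "go_space X le" and "a \<in> topspace X" "b \<in> topspace X"
  shows "closedin X {z\<in>topspace X. le a z \<and> le z b}"
proof -
  have "{z\<in>topspace X. le a z \<and> le z b} =
      topspace X - ({z\<in>topspace X. le z a \<and> z \<noteq> a} \<union> {z\<in>topspace X. le b z \<and> z \<noteq> b})"
    using assms go_space_refl[OF go] go_space_total[OF go] go_space_antisym[OF go] by auto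
  then show ?thesis
    using go_space_openin_rays[OF go] assms by (simp add: closedin_diff openin_Un)
qed

lemma go_space_imp_t1_space:
  assumes go: "go_space X le"
  shows "t1_space X"
  unfolding t1_space_closedin_singleton
proof
  fix x assume x: "x \<in> topspace X"
  have "{z\<in>topspace X. le x z \<and> le z x} = {x}"
    using x go_space_refl[OF go] go_space_antisym[OF go] by blast
  then show "closedin X {x}"
    using go_space_closedin_interval[OF go x x] by simp
qed

lemma linear_order_running_max:
  fixes b :: "nat \<Rightarrow> 'a"
  assumes lin: "linear_order_on_set S le" and b: "\<And>k. b k \<in> S"
  obtains a where "\<And>k. a k \<in> b ` {..k}" "\<And>k. le (b k) (a k)" "\<And>j k. j \<le> k \<Longrightarrow> le (a j) (a k)"
proof
  have refl: "\<And>x. x \<in> S \<Longrightarrow> le x x"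
    and trans: "\<And>x y z. x \<in> S \<Longrightarrow> y \<in> S \<Longrightarrow> z \<in> S \<Longrightarrow> le x y \<Longrightarrow> le y z \<Longrightarrow> le x z"
    and total: "\<And>x y. x \<in> S \<Longrightarrow> y \<in> S \<Longrightarrow> le x y \<or> le y x"
    using lin unfolding linear_order_on_set_def by blast+
  define a where "a = rec_nat (b 0) (\<lambda>k ak. if le ak (b (Suc k)) then b (Suc k) else ak)"
  have a_Suc: "a (Suc k) = (if le (a k) (b (Suc k)) then b (Suc k) else a k)" for k
    by (simp add: a_def)
  have a_in: "a k \<in> b ` {..k} \<and> le (b k) (a k)" for k
  proof (induction k)
    case 0
    show ?case
      using refl b by (simp add: a_def)
  next
    case (Suc k)
    then have "a k \<in> S" using b by auto
    then show ?case
      using Suc b refl total[of "a k" "b (Suc k)"] unfolding a_Suc by (auto simp: le_Suc_eq)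
  qed
  then show "a k \<in> b ` {..k}" "le (b k) (a k)" for k by simp_all
  have a_S: "a k \<in> S" for k using a_in[of k] b by auto
  show "le (a j) (a k)" if "j \<le> k" for j k
    using that
  proof (induction k rule: dec_induct)
    case base
    show ?case
      using a_S refl by simp
  next
    case (step k)
    have "le (a k) (a (Suc k))" using a_S refl unfolding a_Suc by simp
    then show ?case using step.IH a_S trans by blast
  qed
qed

section \<open>Shrinking envelopes\<close>

definition shrinking_envelopes ::
    "'a topology \<Rightarrow> 'a \<Rightarrow> 'a set \<Rightarrow> (nat \<Rightarrow> 'a set) \<Rightarrow> (nat \<Rightarrow> 'a set) \<Rightarrow> bool" where
  "shrinking_envelopes X x S G A \<longleftrightarrow>
     (\<forall>k. openin X (G k) \<and> x \<in> G k \<and> openin X (A k) \<and> S \<inter> G k \<subseteq> A k) \<and>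
     (\<forall>U. openin X U \<and> x \<in> U \<longrightarrow> (\<forall>\<^sub>F k in sequentially. X closure_of A k \<subseteq> U))"

lemma shrinking_envelopes_trivial:
  assumes "openin X P" "x \<in> P" "S \<inter> P = {}"
  shows "shrinking_envelopes X x S (\<lambda>k. P) (\<lambda>k. {})"
  using assms by (simp add: shrinking_envelopes_def)

lemma shrinking_envelopes_Un:
  assumes "shrinking_envelopes X x S G A" "shrinking_envelopes X x S' G' A'"
  shows "shrinking_envelopes X x (S \<union> S') (\<lambda>k. G k \<inter> G' k) (\<lambda>k. A k \<union> A' k)"
  unfolding shrinking_envelopes_def
proof (rule conjI; intro allI impI)
  fix k
  have "openin X (G k) \<and> x \<in> G k \<and> openin X (A k) \<and> S \<inter> G k \<subseteq> A k"
    "openin X (G' k) \<and> x \<in> G' k \<and> openin X (A' k) \<and> S' \<inter> G' k \<subseteq> A' k"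
    using assms unfolding shrinking_envelopes_def by blast+
  then show "openin X (G k \<inter> G' k) \<and> x \<in> G k \<inter> G' k \<and> openin X (A k \<union> A' k) \<and>
      (S \<union> S') \<inter> (G k \<inter> G' k) \<subseteq> A k \<union> A' k"
    by (auto simp: openin_Int openin_Un)
next
  fix U assume "openin X U \<and> x \<in> U"
  then have "\<forall>\<^sub>F k in sequentially. X closure_of A k \<subseteq> U \<and> X closure_of A' k \<subseteq> U"
    using assms unfolding shrinking_envelopes_def by (simp add: eventually_conj)
  then show "\<forall>\<^sub>F k in sequentially. X closure_of (A k \<union> A' k) \<subseteq> U"
    by (simp add: eventually_mono)
qed

lemma shrinking_envelopes_shift:
  assumes "shrinking_envelopes X x S G A" "x \<in> topspace X"
  shows "shrinking_envelopes X x S (case_nat (topspace X) G) (case_nat (topspace X) A)"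
  using assms unfolding shrinking_envelopes_def
  by (auto split: nat.split
      simp flip: eventually_sequentially_Suc[of "\<lambda>k. X closure_of case_nat _ A k \<subseteq> _"])

lemma go_space_left_approach:
  assumes go: "go_space X le" and "countable \<F>" and closed: "\<And>F. F \<in> \<F> \<Longrightarrow> closedin X F"
    and x0: "x0 \<notin> \<Union>\<F>" and lim: "x0 \<in> X closure_of (\<Union>\<F> \<inter> {z. le z x0 \<and> z \<noteq> x0})"
  obtains b :: "nat \<Rightarrow> 'a" where "\<And>n. b n \<in> topspace X" "\<And>n. le (b n) x0" "\<And>n. b n \<noteq> x0"
    "\<And>U. openin X U \<Longrightarrow> x0 \<in> U \<Longrightarrow> \<exists>n. {z\<in>topspace X. le (b n) z \<and> le z x0} \<subseteq> U"
proof -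
  have x0_top: "x0 \<in> topspace X"
    using lim in_closure_of by fast
  have meets: "\<exists>F\<in>\<F>. \<exists>z\<in>F \<inter> P. le z x0 \<and> z \<noteq> x0" if "openin X P" "x0 \<in> P" for P
    using lim that unfolding in_closure_of by blast
  have "\<F> \<noteq> {}"
    using meets[OF openin_topspace x0_top] by blast
  define c where "c = from_nat_into \<F>"
  have c: "range c = \<F>"
    unfolding c_def using \<open>\<F> \<noteq> {}\<close> \<open>countable \<F>\<close> by (rule range_from_nat_into)
  have "\<exists>V. openin X V \<and> order_convex (topspace X) le V \<and> x0 \<in> V \<and> V \<subseteq> topspace X - c n" for n
  proof (rule go_space_convex_nbhd[OF go])
    show "openin X (topspace X - c n)"
      using closed c by blast
    show "x0 \<in> topspace X - c n"
      using x0 x0_top c by blast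
  qed blast
  then obtain V where V: "\<And>n. openin X (V n)" "\<And>n. order_convex (topspace X) le (V n)"
    "\<And>n. x0 \<in> V n" and V_c: "\<And>n. V n \<subseteq> topspace X - c n"
    by metis
  have "\<exists>z\<in>V n. le z x0 \<and> z \<noteq> x0" for n
    using meets[OF V(1,3)] by blast
  then obtain b where b: "\<And>n. b n \<in> V n" "\<And>n. le (b n) x0" "\<And>n. b n \<noteq> x0"
    by metis
  have b_top: "b n \<in> topspace X" for n
    using b V(1) openin_subset by blast
  show ?thesis
  proof (rule that[OF b_top b(2,3)])
    fix U assume "openin X U" "x0 \<in> U"
    then obtain W where W: "openin X W" "order_convex (topspace X) le W" "x0 \<in> W" "W \<subseteq> U"
      using go_space_convex_nbhd[OF go] by blast
    obtain n z where z: "z \<in> c n" "z \<in> W" "le z x0" "z \<noteq> x0"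
      using meets[OF W(1,3)] c by blast
    have z_top: "z \<in> topspace X"
      using z W(1) openin_subset by blast
    have "\<not> le (b n) z" \<comment> \<open>else \<open>z\<close> would lie in \<open>V n\<close>, which misses \<open>c n\<close>\<close>
      using order_convexD[OF V(2) b(1) V(3) z_top] z(1,3) V_c by blast
    then have "le z (b n)"
      using go_space_total[OF go z_top b_top] by blast
    then have "{w\<in>topspace X. le (b n) w \<and> le w x0} \<subseteq> W"
      using order_convexD[OF W(2) z(2) W(3)] go_space_trans[OF go z_top b_top] by blast
    then show "\<exists>n. {w\<in>topspace X. le (b n) w \<and> le w x0} \<subseteq> U"
      using W(4) by blast
  qed
qed

lemma go_space_left_envelopes:
  assumes go: "go_space X le" and "countable \<F>" and closed: "\<And>F. F \<in> \<F> \<Longrightarrow> closedin X F"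
    and x0_top: "x0 \<in> topspace X" and x0: "x0 \<notin> \<Union>\<F>"
  obtains G A where "shrinking_envelopes X x0 (\<Union>\<F> \<inter> {z. le z x0 \<and> z \<noteq> x0}) G A"
proof (cases "x0 \<in> X closure_of (\<Union>\<F> \<inter> {z. le z x0 \<and> z \<noteq> x0})")
  case False
  then obtain P where "openin X P" "x0 \<in> P" "(\<Union>\<F> \<inter> {z. le z x0 \<and> z \<noteq> x0}) \<inter> P = {}"
    using x0_top unfolding in_closure_of by blast
  then show ?thesis
    using that shrinking_envelopes_trivial by metis
next
  case True
  obtain b :: "nat \<Rightarrow> 'a" where b: "\<And>n. b n \<in> topspace X" "\<And>n. le (b n) x0" "\<And>n. b n \<noteq> x0"
    and b_lim: "\<And>U. openin X U \<Longrightarrow> x0 \<in> U \<Longrightarrow> \<exists>n. {z\<in>topspace X. le (b n) z \<and> le z x0} \<subseteq> U"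
    using go_space_left_approach[OF go \<open>countable \<F>\<close> closed x0 True] by blast
  obtain a where a: "\<And>k. a k \<in> b ` {..k}" "\<And>k. le (b k) (a k)" "\<And>j k. j \<le> k \<Longrightarrow> le (a j) (a k)"
    using linear_order_running_max[OF go_space_linear_order[OF go], of b] b(1) by blast
  have a_b: "\<exists>i. a k = b i" for k
    using a(1)[of k] by blast
  have a_top: "a k \<in> topspace X" for k
    using a_b b(1) by metis
  have a_x0: "le (a k) x0 \<and> a k \<noteq> x0" for k
    using a_b b(2,3) by metis
  define G where "G k = {z\<in>topspace X. le (a k) z \<and> z \<noteq> a k}" for k
  define A where "A k = G k \<inter> {z\<in>topspace X. le z x0 \<and> z \<noteq> x0}" for k
  have closure_A: "X closure_of A k \<subseteq> {z\<in>topspace X. le (a k) z \<and> le z x0}" for k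
    by (rule closure_of_minimal)
      (auto simp: A_def G_def go_space_closedin_interval[OF go a_top x0_top])
  show ?thesis
  proof (rule that, unfold shrinking_envelopes_def, rule conjI; intro allI impI)
    fix k
    have "\<Union>\<F> \<subseteq> topspace X"
      using closed closedin_subset by blast
    then show "openin X (G k) \<and> x0 \<in> G k \<and> openin X (A k) \<and>
        \<Union>\<F> \<inter> {z. le z x0 \<and> z \<noteq> x0} \<inter> G k \<subseteq> A k"
      using go_space_openin_rays[OF go] a_top[of k] a_x0[of k] x0_top
      by (auto simp: A_def G_def openin_Int)
  next
    fix U assume "openin X U \<and> x0 \<in> U"
    then obtain n where n: "{z\<in>topspace X. le (b n) z \<and> le z x0} \<subseteq> U"
      using b_lim by blast
    have "X closure_of A k \<subseteq> U" if "n \<le> k" for k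
    proof -
      have "le (b n) (a k)"
        using a(2)[of n] a(3)[OF that] go_space_trans[OF go b(1) a_top a_top] by blast
      then have "{z\<in>topspace X. le (a k) z \<and> le z x0} \<subseteq> U"
        using n go_space_trans[OF go b(1) a_top] by blast
      then show ?thesis
        using closure_A by blast
    qed
    then show "\<forall>\<^sub>F k in sequentially. X closure_of A k \<subseteq> U"
      by (auto simp: eventually_sequentially)
  qed
qed

lemma go_space_envelopes:
  assumes go: "go_space X le" and "countable \<F>" and closed: "\<And>F. F \<in> \<F> \<Longrightarrow> closedin X F"
    and x0_top: "x0 \<in> topspace X" and x0: "x0 \<notin> \<Union>\<F>"
  obtains G A where "shrinking_envelopes X x0 (\<Union>\<F>) G A"
proof -
  obtain G1 A1 where left: "shrinking_envelopes X x0 (\<Union>\<F> \<inter> {z. le z x0 \<and> z \<noteq> x0}) G1 A1"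
    using go_space_left_envelopes[OF go \<open>countable \<F>\<close> closed x0_top x0] by blast
  obtain G2 A2 where right: "shrinking_envelopes X x0 (\<Union>\<F> \<inter> {z. le x0 z \<and> z \<noteq> x0}) G2 A2"
    using go_space_left_envelopes[OF go_space_converse[OF go] \<open>countable \<F>\<close> closed x0_top x0]
    by blast
  have "\<Union>\<F> \<subseteq> topspace X"
    using closed closedin_subset by blast
  then have "\<Union>\<F> = \<Union>\<F> \<inter> {z. le z x0 \<and> z \<noteq> x0} \<union> \<Union>\<F> \<inter> {z. le x0 z \<and> z \<noteq> x0}"
    using x0 go_space_total[OF go _ x0_top] by blast
  then show ?thesis
    using shrinking_envelopes_Un[OF left right] that by metis
qed

section \<open>Countable regular spaces\<close>

lemma countable_regular_clopen_nbhd: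
  assumes cY: "countable (topspace Y)" and "regular_space Y" "t1_space Y"
    and W: "openin Y W" "y \<in> W"
  obtains Z where "openin Y Z" "closedin Y Z" "y \<in> Z" "Z \<subseteq> W"
proof -
  have "normal_space Y"
    using \<open>regular_space Y\<close> countable_imp_Lindelof_space[OF cY]
    by (rule regular_Lindelof_imp_normal_space)
  moreover have "closedin Y {y}"
    using W openin_subset by (intro closedin_t1_singleton[OF \<open>t1_space Y\<close>]) blast
  moreover have "closedin Y (topspace Y - W)"
    using W by blast
  ultimately obtain f where f: "continuous_map Y euclideanreal f"
      "f ` {y} \<subseteq> {0}" "f ` (topspace Y - W) \<subseteq> {1}"
    using Urysohn_lemma_alt[of Y "{y}" "topspace Y - W" 0 1] W by (auto simp: disjnt_def)
  txt \<open>Being countable, the range of \<open>f\<close> misses some level \<open>r \<in> (0,1)\<close>,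
    so the sublevel set at \<open>r\<close> is clopen.\<close>
  have "uncountable {0<..<1::real}"
    by (simp add: uncountable_open_interval)
  moreover have "countable (f ` topspace Y)"
    using cY by blast
  ultimately obtain r where r: "r \<in> {0<..<1::real}" "r \<notin> f ` topspace Y"
    by (metis countable_subset subsetI)
  define Z where "Z = {z \<in> topspace Y. f z \<in> {..<r}}"
  have "Z = {z \<in> topspace Y. f z \<in> {..r}}"
    using r unfolding Z_def by force
  then have "closedin Y Z"
    using closedin_continuous_map_preimage[OF f(1), of "{..r}"] by simp
  moreover have "openin Y Z"
    unfolding Z_def using openin_continuous_map_preimage[OF f(1), of "{..<r}"] by simp
  moreover have "y \<in> Z"
    using f(2) r W openin_subset unfolding Z_def by auto
  moreover have "Z \<subseteq> W"
    using f(3) r unfolding Z_def by (force simp: image_subset_iff)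
  ultimately show ?thesis
    using that by blast
qed

lemma countable_regular_clopen_nbhd_seq:
  assumes cY: "countable (topspace Y)" and rY: "regular_space Y" and t1: "t1_space Y"
    and y0: "y0 \<in> topspace Y"
    and W: "\<And>k. openin Y (W k)" "\<And>k. y0 \<in> W k" "W 0 = topspace Y"
  obtains Z where "Z 0 = topspace Y" "decseq Z" "\<And>k. openin Y (Z k)" "\<And>k. closedin Y (Z k)"
    "\<And>k. Z k \<subseteq> W k" "(\<Inter>k. Z k) = {y0}"
proof -
  define e where "e = from_nat_into (topspace Y)"
  have e: "range e = topspace Y"
    unfolding e_def using y0 cY by (intro range_from_nat_into) auto
  have "\<exists>C. openin Y C \<and> closedin Y C \<and> y0 \<in> C \<and> C \<subseteq> W (Suc k) - ({e k} - {y0})" for k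
  proof -
    have "closedin Y ({e k} - {y0})"
      using closedin_t1_singleton[OF t1] e by (cases "e k = y0") auto
    then have "openin Y (W (Suc k) - ({e k} - {y0}))"
      using W(1) by blast
    moreover have "y0 \<in> W (Suc k) - ({e k} - {y0})"
      using W(2) by blast
    ultimately show ?thesis
      using countable_regular_clopen_nbhd[OF cY rY t1] by metis
  qed
  then obtain C where C: "\<And>k. openin Y (C k)" "\<And>k. closedin Y (C k)" "\<And>k. y0 \<in> C k"
    "\<And>k. C k \<subseteq> W (Suc k) - ({e k} - {y0})"
    by metis
  define Z where "Z = rec_nat (topspace Y) (\<lambda>k Zk. Zk \<inter> C k)"
  have Z_0: "Z 0 = topspace Y" and Z_Suc: "Z (Suc k) = Z k \<inter> C k" for k
    by (simp_all add: Z_def)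
  have Z_clopen: "openin Y (Z k) \<and> closedin Y (Z k) \<and> y0 \<in> Z k" for k
    by (induction k) (use y0 C in \<open>auto simp: Z_0 Z_Suc\<close>)
  show ?thesis
  proof (rule that)
    show "Z 0 = topspace Y"
      by (rule Z_0)
    show "decseq Z"
      by (rule decseq_SucI) (simp add: Z_Suc)
    show "openin Y (Z k)" "closedin Y (Z k)" for k
      using Z_clopen by simp_all
    show "Z k \<subseteq> W k" for k
      using C(4) W(3) Z_0 by (cases k) (auto simp: Z_Suc)
    have "y = y0" if "\<forall>k. y \<in> Z k" for y
    proof -
      have "y \<in> range e"
        using that[rule_format, of 0] Z_0 e by simp
      then obtain i where "y = e i"
        by blast
      moreover have "y \<in> C i"
        using that Z_Suc by blast
      ultimately show "y = y0"
        using C(4) by blast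
    qed
    then show "(\<Inter>k. Z k) = {y0}"
      using Z_clopen by blast
  qed
qed

lemma exists_exit_step:
  fixes Z :: "nat \<Rightarrow> 'a set"
  assumes "y \<in> Z 0" "y \<notin> Z n"
  shows "\<exists>k. y \<in> Z k \<and> y \<notin> Z (Suc k)"
  using assms by (induction n) blast+

lemma decseq_exit_step_le:
  fixes Z :: "nat \<Rightarrow> 'a set"
  assumes "decseq Z" "y \<in> Z k" "y \<notin> Z (Suc j)"
  shows "k \<le> j"
  using assms decseqD not_less_eq_eq by blast

section \<open>Pinning a lower semicontinuous map at a point\<close>

lemma lscD: "lsc Y X \<psi> \<Longrightarrow> openin X U \<Longrightarrow> openin Y {y\<in>topspace Y. \<psi> y \<inter> U \<noteq> {}}"
  by (simp add: lsc_def)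

lemma lscI_local:
  assumes "\<And>U y. openin X U \<Longrightarrow> y \<in> topspace Y \<Longrightarrow> \<psi> y \<inter> U \<noteq> {} \<Longrightarrow>
      \<exists>T. openin Y T \<and> y \<in> T \<and> (\<forall>y'\<in>T. \<psi> y' \<inter> U \<noteq> {})"
  shows "lsc Y X \<psi>"
  unfolding lsc_def
proof (intro allI impI)
  fix U assume "openin X U"
  show "openin Y {y\<in>topspace Y. \<psi> y \<inter> U \<noteq> {}}"
  proof (subst openin_subopen, intro ballI)
    fix y assume "y \<in> {y\<in>topspace Y. \<psi> y \<inter> U \<noteq> {}}"
    then obtain T where T: "openin Y T" "y \<in> T" "\<forall>y'\<in>T. \<psi> y' \<inter> U \<noteq> {}"
      using assms \<open>openin X U\<close> by blast
    then have "T \<subseteq> {y\<in>topspace Y. \<psi> y \<inter> U \<noteq> {}}"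
      using openin_subset by blast
    with T show "\<exists>T. openin Y T \<and> y \<in> T \<and> T \<subseteq> {y\<in>topspace Y. \<psi> y \<inter> U \<noteq> {}}"
      by blast
  qed
qed

definition closed_lsc :: "'b topology \<Rightarrow> 'a topology \<Rightarrow> ('b \<Rightarrow> 'a set) \<Rightarrow> bool" where
  "closed_lsc Y X \<psi> \<longleftrightarrow> (\<forall>y\<in>topspace Y. closedin X (\<psi> y) \<and> \<psi> y \<noteq> {}) \<and> lsc Y X \<psi>"

definition usc_at :: "'b topology \<Rightarrow> 'a topology \<Rightarrow> ('b \<Rightarrow> 'a set) \<Rightarrow> 'b \<Rightarrow> bool" where
  "usc_at Y X \<psi> y0 \<longleftrightarrow>
     (\<forall>U. openin X U \<and> \<psi> y0 \<subseteq> U \<longrightarrow> (\<exists>T. openin Y T \<and> y0 \<in> T \<and> (\<forall>y\<in>T. \<psi> y \<subseteq> U)))"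

locale pinning =
  fixes X :: "'a topology" and Y :: "'b topology" and \<psi> :: "'b \<Rightarrow> 'a set"
    and y0 :: 'b and x0 :: 'a and G A :: "nat \<Rightarrow> 'a set" and Z :: "nat \<Rightarrow> 'b set"
  assumes t1: "t1_space X"
    and \<psi>: "closed_lsc Y X \<psi>"
    and y0: "y0 \<in> topspace Y" and x0: "x0 \<in> \<psi> y0"
    and envelopes: "shrinking_envelopes X x0 (\<Union>(\<psi> ` {y\<in>topspace Y. x0 \<notin> \<psi> y})) G A"
    and Z_0: "Z 0 = topspace Y" and Z_dec: "decseq Z"
    and Z_open: "\<And>k. openin Y (Z k)" and Z_closed: "\<And>k. closedin Y (Z k)"
    and Z_Inter: "(\<Inter>k. Z k) = {y0}"
    and Z_meets_G: "\<And>k y. y \<in> Z k \<Longrightarrow> \<psi> y \<inter> G k \<noteq> {}"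
begin

lemma \<psi>_closed: "y \<in> topspace Y \<Longrightarrow> closedin X (\<psi> y)"
  and \<psi>_lsc: "lsc Y X \<psi>"
  using \<psi> by (simp_all add: closed_lsc_def)

lemma \<psi>_subset_topspace: "y \<in> topspace Y \<Longrightarrow> \<psi> y \<subseteq> topspace X"
  using \<psi>_closed closedin_subset by blast

lemma x0_topspace: "x0 \<in> topspace X"
  using \<psi>_subset_topspace[OF y0] x0 by blast

lemma envelope_open: "openin X (G k)" "x0 \<in> G k" "openin X (A k)"
  using envelopes by (simp_all add: shrinking_envelopes_def)

lemma envelope_covers: "y \<in> topspace Y \<Longrightarrow> x0 \<notin> \<psi> y \<Longrightarrow> \<psi> y \<inter> G k \<subseteq> A k"
  using envelopes unfolding shrinking_envelopes_def by blast

lemma envelope_shrinks: "openin X U \<Longrightarrow> x0 \<in> U \<Longrightarrow> \<exists>N. \<forall>k\<ge>N. X closure_of A k \<subseteq> U"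
  using envelopes unfolding shrinking_envelopes_def eventually_sequentially by blast

lemma Z_subset_topspace: "Z k \<subseteq> topspace Y"
  using Z_dec Z_0 decseqD by blast

lemma y0_in_Z: "y0 \<in> Z k"
  using Z_Inter by blast

definition level :: "'b \<Rightarrow> nat" where
  "level y = (SOME k. y \<in> Z k \<and> y \<notin> Z (Suc k))"

lemma level:
  assumes "y \<in> topspace Y" "y \<noteq> y0"
  shows "y \<in> Z (level y) \<and> y \<notin> Z (Suc (level y))"
proof -
  obtain n where "y \<notin> Z n"
    using Z_Inter assms by blast
  then have "\<exists>k. y \<in> Z k \<and> y \<notin> Z (Suc k)"
    using exists_exit_step[of y Z n] Z_0 assms(1) by blast
  then show ?thesis
    unfolding level_def by (rule someI_ex)
qed

lemma le_level:
  assumes "y \<in> Z k" "y \<noteq> y0"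
  shows "k \<le> level y"
proof -
  have "y \<notin> Z (Suc (level y))"
    using level[OF _ assms(2)] assms(1) Z_subset_topspace by blast
  then show ?thesis
    using decseq_exit_step_le[OF Z_dec assms(1)] by blast
qed

lemma level_eq:
  assumes "y \<in> Z k" "y \<notin> Z (Suc k)"
  shows "level y = k"
proof -
  have y: "y \<in> topspace Y" "y \<noteq> y0"
    using assms Z_subset_topspace y0_in_Z by blast+
  have "level y \<le> k"
    using decseq_exit_step_le[OF Z_dec _ assms(2)] level[OF y] by blast
  then show ?thesis
    using le_level[OF assms(1) y(2)] by simp
qed

text \<open>As the closures of the \<open>A k\<close> shrink to \<open>x0\<close>,
  this forces upper semicontinuity at \<open>y0\<close>; the rings are clopen and \<open>A k\<close> is open,
  so lower semicontinuity survives; and \<open>\<psi> y \<inter> G k \<subseteq> A k\<close> keeps the values nonempty.\<close>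
definition pinned :: "'b \<Rightarrow> 'a set" where
  "pinned y = (if y = y0 then {x0} else X closure_of (\<psi> y \<inter> A (level y)) \<union> (\<psi> y \<inter> {x0}))"

lemma pinned_y0 [simp]: "pinned y0 = {x0}"
  by (simp add: pinned_def)

lemma pinned_level: "y \<noteq> y0 \<Longrightarrow> pinned y = X closure_of (\<psi> y \<inter> A (level y)) \<union> (\<psi> y \<inter> {x0})"
  by (simp add: pinned_def)

lemma pinned_subset: "y \<in> topspace Y \<Longrightarrow> pinned y \<subseteq> \<psi> y"
  using x0 \<psi>_closed by (auto simp: pinned_def closure_of_minimal)

lemma pinned_closedin:
  assumes "y \<in> topspace Y"
  shows "closedin X (pinned y)"
  using closedin_t1_singleton[OF t1 x0_topspace] \<psi>_closed[OF assms]
  by (simp add: pinned_def closedin_Int closedin_Un)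

lemma subset_pinned:
  assumes "y \<in> topspace Y" "y \<noteq> y0"
  shows "\<psi> y \<inter> A (level y) \<subseteq> pinned y"
proof -
  have "\<psi> y \<inter> A (level y) \<subseteq> topspace X"
    using \<psi>_subset_topspace[OF assms(1)] by blast
  then show ?thesis
    using closure_of_subset assms(2) by (fastforce simp: pinned_level)
qed

lemma pinned_nonempty:
  assumes y: "y \<in> topspace Y"
  shows "pinned y \<noteq> {}"
proof (cases "y = y0 \<or> x0 \<in> \<psi> y")
  case True
  then show ?thesis by (auto simp: pinned_def)
next
  case False
  have "\<psi> y \<inter> G (level y) \<noteq> {}"
    using Z_meets_G level[OF y] False by blast
  then have "\<psi> y \<inter> A (level y) \<noteq> {}"
    using envelope_covers[OF y] False by blast
  then show ?thesis
    using subset_pinned[OF y] False by blast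
qed

lemma usc_at_pinned: "usc_at Y X pinned y0"
  unfolding usc_at_def
proof (intro allI impI)
  fix U assume U: "openin X U \<and> pinned y0 \<subseteq> U"
  then obtain N where N: "\<And>k. k \<ge> N \<Longrightarrow> X closure_of A k \<subseteq> U"
    using envelope_shrinks by auto
  have "pinned y \<subseteq> U" if "y \<in> Z N" for y
  proof (cases "y = y0")
    case False
    have "X closure_of (\<psi> y \<inter> A (level y)) \<subseteq> U"
      using N[OF le_level[OF that False]] closure_of_mono[of "\<psi> y \<inter> A (level y)"] by blast
    then show ?thesis
      using U False by (auto simp: pinned_level)
  qed (use U in simp)
  then show "\<exists>T. openin Y T \<and> y0 \<in> T \<and> (\<forall>y\<in>T. pinned y \<subseteq> U)"
    using Z_open y0_in_Z by blast
qed

lemma lsc_pinned: "lsc Y X pinned"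
proof (rule lscI_local)
  fix U y1 assume U: "openin X U" and y1: "y1 \<in> topspace Y" and meets: "pinned y1 \<inter> U \<noteq> {}"
  show "\<exists>T. openin Y T \<and> y1 \<in> T \<and> (\<forall>y\<in>T. pinned y \<inter> U \<noteq> {})"
  proof (cases "y1 = y0")
    case True
    then obtain T where T: "openin Y T" "y1 \<in> T" "\<forall>y\<in>T. pinned y \<subseteq> U"
      using usc_at_pinned U meets unfolding usc_at_def by auto
    have "pinned y \<inter> U \<noteq> {}" if "y \<in> T" for y
    proof -
      have "pinned y \<noteq> {}"
        using pinned_nonempty openin_subset[OF T(1)] that by blast
      then show ?thesis
        using T(3) that by blast
    qed
    with T show ?thesis
      by blast
  next
    case False
    define k where "k = level y1"
    define P where "P = Z k - Z (Suc k)"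
    have P_open: "openin Y P"
      unfolding P_def using Z_open Z_closed by blast
    have y1_P: "y1 \<in> P"
      unfolding P_def k_def using level[OF y1 False] by blast
    have P_level: "y \<in> topspace Y \<and> y \<noteq> y0 \<and> level y = k" if "y \<in> P" for y
      using that Z_subset_topspace y0_in_Z level_eq unfolding P_def by blast
    have hit: "pinned y \<inter> U \<noteq> {}" if "y \<in> P" "\<psi> y \<inter> (A k \<inter> U) \<noteq> {} \<or> x0 \<in> \<psi> y \<inter> U" for y
      using that P_level[OF that(1)] subset_pinned by (fastforce simp: pinned_level)
    have "\<psi> y1 \<inter> (A k \<inter> U) \<noteq> {} \<or> x0 \<in> \<psi> y1 \<inter> U"
      using meets openin_Int_closure_of_eq_empty[OF U] False by (auto simp: pinned_level k_def)
    then show ?thesis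
    proof
      assume "\<psi> y1 \<inter> (A k \<inter> U) \<noteq> {}"
      then show ?thesis
        using hit y1 y1_P P_open lscD[OF \<psi>_lsc, of "A k \<inter> U"] envelope_open U
        by (intro exI[of _ "P \<inter> {y\<in>topspace Y. \<psi> y \<inter> (A k \<inter> U) \<noteq> {}}"]) (auto simp: openin_Int)
    next
      assume x0_U: "x0 \<in> \<psi> y1 \<inter> U"
      have "\<psi> y \<inter> (A k \<inter> U) \<noteq> {} \<or> x0 \<in> \<psi> y \<inter> U"
        if "y \<in> P" "\<psi> y \<inter> (G k \<inter> U) \<noteq> {}" for y
      proof -
        have "x0 \<notin> \<psi> y \<Longrightarrow> \<psi> y \<inter> G k \<subseteq> A k"
          using envelope_covers P_level[OF that(1)] by blast
        then show ?thesis
          using that(2) x0_U by blast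
      qed
      then show ?thesis
        using hit y1 y1_P x0_U P_open lscD[OF \<psi>_lsc, of "G k \<inter> U"] envelope_open U
        by (intro exI[of _ "P \<inter> {y\<in>topspace Y. \<psi> y \<inter> (G k \<inter> U) \<noteq> {}}"]) (auto simp: openin_Int)
    qed
  qed
qed

lemma closed_lsc_pinned: "closed_lsc Y X pinned"
  using pinned_closedin pinned_nonempty lsc_pinned by (simp add: closed_lsc_def)

end

lemma go_space_pinned_submap:
  assumes go: "go_space X le"
    and cY: "countable (topspace Y)" and rY: "regular_space Y" and t1: "t1_space Y"
    and \<psi>: "closed_lsc Y X \<psi>" and y0: "y0 \<in> topspace Y" and x0: "x0 \<in> \<psi> y0"
  obtains \<psi>' where "closed_lsc Y X \<psi>'" "\<And>y. y \<in> topspace Y \<Longrightarrow> \<psi>' y \<subseteq> \<psi> y"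
    "\<psi>' y0 = {x0}" "usc_at Y X \<psi>' y0"
proof -
  have \<psi>_closed: "\<And>y. y \<in> topspace Y \<Longrightarrow> closedin X (\<psi> y)"
    and \<psi>_nonempty: "\<And>y. y \<in> topspace Y \<Longrightarrow> \<psi> y \<noteq> {}" and \<psi>_lsc: "lsc Y X \<psi>"
    using \<psi> by (simp_all add: closed_lsc_def)
  have x0_top: "x0 \<in> topspace X"
    using \<psi>_closed[OF y0] closedin_subset x0 by blast
  define \<F> where "\<F> = \<psi> ` {y\<in>topspace Y. x0 \<notin> \<psi> y}"
  have "countable \<F>"
    unfolding \<F>_def using cY by (simp add: countable_subset[of _ "topspace Y"])
  moreover have "\<And>F. F \<in> \<F> \<Longrightarrow> closedin X F" "x0 \<notin> \<Union>\<F>"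
    unfolding \<F>_def using \<psi>_closed by auto
  ultimately obtain G A where "shrinking_envelopes X x0 (\<Union>\<F>) G A"
    using go_space_envelopes[OF go _ _ x0_top] by metis
  txt \<open>Index \<open>0\<close> is reserved for the points outside \<open>Z 1\<close>, where \<open>\<psi>\<close> stays unchanged.\<close>
  then have env: "shrinking_envelopes X x0 (\<Union>\<F>) (case_nat (topspace X) G) (case_nat (topspace X) A)"
    using x0_top by (rule shrinking_envelopes_shift)
  define W where "W k = {y\<in>topspace Y. \<psi> y \<inter> case_nat (topspace X) G k \<noteq> {}}" for k
  have "openin Y (W k)" "y0 \<in> W k" for k
    using env lscD[OF \<psi>_lsc] x0 y0 unfolding W_def shrinking_envelopes_def by blast+
  moreover have "W 0 = topspace Y"
    using \<psi>_nonempty \<psi>_closed closedin_subset unfolding W_def by fastforce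
  ultimately obtain Z where Z: "Z 0 = topspace Y" "decseq Z" "\<And>k. openin Y (Z k)"
    "\<And>k. closedin Y (Z k)" "\<And>k. Z k \<subseteq> W k" "(\<Inter>k. Z k) = {y0}"
    using countable_regular_clopen_nbhd_seq[OF cY rY t1 y0] by metis
  interpret pinning X Y \<psi> y0 x0 "case_nat (topspace X) G" "case_nat (topspace X) A" Z
  proof
    show "t1_space X"
      by (rule go_space_imp_t1_space[OF go])
    show "\<And>k y. y \<in> Z k \<Longrightarrow> \<psi> y \<inter> case_nat (topspace X) G k \<noteq> {}"
      using Z(5) unfolding W_def by blast
  qed (use \<psi> y0 x0 env Z in \<open>simp_all add: \<F>_def\<close>)
  show ?thesis
    using that closed_lsc_pinned pinned_subset pinned_y0 usc_at_pinned by blast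
qed

section \<open>Continuous selections\<close>

lemma continuous_selection_of_pinned_chain:
  fixes e :: "nat \<Rightarrow> 'b" and \<Phi> :: "nat \<Rightarrow> 'b \<Rightarrow> 'a set"
  assumes e: "range e = topspace Y"
    and \<Phi>_dec: "\<And>n y. y \<in> topspace Y \<Longrightarrow> \<Phi> (Suc n) y \<subseteq> \<Phi> n y"
    and \<Phi>_nonempty: "\<And>n y. y \<in> topspace Y \<Longrightarrow> \<Phi> n y \<noteq> {}"
    and \<Phi>_topspace: "\<And>y. y \<in> topspace Y \<Longrightarrow> \<Phi> 0 y \<subseteq> topspace X"
    and singleton: "\<And>n. is_singleton (\<Phi> (Suc n) (e n))"
    and usc: "\<And>n. usc_at Y X (\<Phi> (Suc n)) (e n)"
  obtains f where "continuous_map Y X f" "\<And>y. y \<in> topspace Y \<Longrightarrow> f y \<in> \<Phi> 0 y"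
proof -
  define f where "f y = the_elem (\<Phi> (Suc (inv e y)) y)" for y
  have e_inv: "e (inv e y) = y" if "y \<in> topspace Y" for y
    using that e f_inv_into_f by metis
  have f_at: "\<Phi> (Suc (inv e y)) y = {f y}" if "y \<in> topspace Y" for y
    using singleton[of "inv e y"] e_inv[OF that] unfolding f_def is_singleton_the_elem by simp
  have f_in: "f y \<in> \<Phi> k y" if y: "y \<in> topspace Y" for y k
  proof -
    have \<Phi>_antimono: "\<Phi> k y \<subseteq> \<Phi> j y" if "j \<le> k" for j k
      using lift_Suc_antimono_le[of "\<lambda>n. \<Phi> n y"] \<Phi>_dec[OF y] that by blast
    show ?thesis
    proof (cases "k \<le> Suc (inv e y)")
      case True
      then show ?thesis
        using \<Phi>_antimono f_at[OF y] by blast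
    next
      case False
      then show ?thesis
        using \<Phi>_antimono[of "Suc (inv e y)" k] f_at[OF y] \<Phi>_nonempty[OF y, of k] by auto
    qed
  qed
  have "continuous_map Y X f"
    unfolding continuous_map_eq_topcontinuous_at topcontinuous_at_def
  proof (intro ballI conjI allI impI)
    show "f \<in> topspace Y \<rightarrow> topspace X"
      using f_in[of _ 0] \<Phi>_topspace by blast
  next
    fix y U assume y: "y \<in> topspace Y" and U: "openin X U \<and> f y \<in> U"
    then obtain T where T: "openin Y T" "y \<in> T" "\<forall>y'\<in>T. \<Phi> (Suc (inv e y)) y' \<subseteq> U"
      using usc[of "inv e y"] f_at[OF y] e_inv[OF y] unfolding usc_at_def
      by (metis empty_subsetI insert_subset)
    have "f y' \<in> U" if "y' \<in> T" for y'
      using f_in[of y' "Suc (inv e y)"] openin_subset[OF T(1)] T(3) that by blast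
    with T show "\<exists>T. openin Y T \<and> y \<in> T \<and> (\<forall>y'\<in>T. f y' \<in> U)"
      by blast
  qed
  then show ?thesis
    using that f_in by blast
qed

lemma go_space_pinned_chain:
  fixes e :: "nat \<Rightarrow> 'b"
  assumes go: "go_space X le"
    and cY: "countable (topspace Y)" and rY: "regular_space Y" and t1: "t1_space Y"
    and \<phi>: "closed_lsc Y X \<phi>" and e: "range e \<subseteq> topspace Y"
  obtains \<Phi> :: "nat \<Rightarrow> 'b \<Rightarrow> 'a set"
  where "\<And>n. closed_lsc Y X (\<Phi> n)" "\<And>y. y \<in> topspace Y \<Longrightarrow> \<Phi> 0 y \<subseteq> \<phi> y"
    "\<And>n y. y \<in> topspace Y \<Longrightarrow> \<Phi> (Suc n) y \<subseteq> \<Phi> n y"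
    "\<And>n. is_singleton (\<Phi> (Suc n) (e n))" "\<And>n. usc_at Y X (\<Phi> (Suc n)) (e n)"
proof -
  have "\<exists>\<Phi>. \<forall>n. (closed_lsc Y X (\<Phi> n) \<and> (\<forall>y\<in>topspace Y. \<Phi> n y \<subseteq> \<phi> y)) \<and>
      ((\<forall>y\<in>topspace Y. \<Phi> (Suc n) y \<subseteq> \<Phi> n y) \<and> is_singleton (\<Phi> (Suc n) (e n)) \<and>
       usc_at Y X (\<Phi> (Suc n)) (e n))"
  proof (rule dependent_nat_choice)
    fix \<psi> n assume \<psi>: "closed_lsc Y X \<psi> \<and> (\<forall>y\<in>topspace Y. \<psi> y \<subseteq> \<phi> y)"
    then obtain x0 where "x0 \<in> \<psi> (e n)"
      using e unfolding closed_lsc_def by blast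
    then obtain \<psi>' where "closed_lsc Y X \<psi>'" "\<And>y. y \<in> topspace Y \<Longrightarrow> \<psi>' y \<subseteq> \<psi> y"
        "\<psi>' (e n) = {x0}" "usc_at Y X \<psi>' (e n)"
      using go_space_pinned_submap[OF go cY rY t1] \<psi> e by blast
    moreover from this(3) have "is_singleton (\<psi>' (e n))"
      by (simp add: is_singleton_def)
    ultimately show "\<exists>\<psi>'. (closed_lsc Y X \<psi>' \<and> (\<forall>y\<in>topspace Y. \<psi>' y \<subseteq> \<phi> y)) \<and>
        (\<forall>y\<in>topspace Y. \<psi>' y \<subseteq> \<psi> y) \<and> is_singleton (\<psi>' (e n)) \<and> usc_at Y X \<psi>' (e n)"
      using \<psi> by blast
  qed (use \<phi> in blast)
  then show ?thesis
    using that by blast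
qed

theorem mainTheorem2:
  fixes X :: "'a topology" and le :: "'a \<Rightarrow> 'a \<Rightarrow> bool" and Y :: "'b topology"
  assumes "go_space X le"
    and "countable (topspace Y)" and "regular_space Y" and "t1_space Y"
  shows "selective Y X"
  unfolding selective_def closed_lsc_def[symmetric]
proof (intro allI impI)
  fix \<phi> assume \<phi>: "closed_lsc Y X \<phi>"
  show "\<exists>f. continuous_map Y X f \<and> (\<forall>y\<in>topspace Y. f y \<in> \<phi> y)"
  proof (cases "topspace Y = {}")
    case True
    then show ?thesis
      by (auto simp: continuous_map_def)
  next
    case False
    then obtain e :: "nat \<Rightarrow> 'b" where e: "range e = topspace Y"
      using \<open>countable (topspace Y)\<close> range_from_nat_into by metis
    then obtain \<Phi> where \<Phi>: "\<And>n. closed_lsc Y X (\<Phi> n)"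
      and \<Phi>_0: "\<And>y. y \<in> topspace Y \<Longrightarrow> \<Phi> 0 y \<subseteq> \<phi> y"
      and \<Phi>_chain: "\<And>n y. y \<in> topspace Y \<Longrightarrow> \<Phi> (Suc n) y \<subseteq> \<Phi> n y"
        "\<And>n. is_singleton (\<Phi> (Suc n) (e n))" "\<And>n. usc_at Y X (\<Phi> (Suc n)) (e n)"
      using go_space_pinned_chain[OF assms \<phi>] by blast
    obtain f where "continuous_map Y X f" "\<And>y. y \<in> topspace Y \<Longrightarrow> f y \<in> \<Phi> 0 y"
      using continuous_selection_of_pinned_chain[OF e \<Phi>_chain(1) _ _ \<Phi>_chain(2,3)] \<Phi>
      unfolding closed_lsc_def by (metis closedin_subset)
    then show ?thesis
      using \<Phi>_0 by blast
  qed
qed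

end
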